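(* In the two-receiver star network (source transmitting to receivers $1,2$; at each slot, independently, the set of receivers that successfully receive is $\emptyset,\{1\},\{2\},\{1,2\}$ with probabilities $\lambda_\emptyset,\lambda_{\{1\}},\lambda_{\{2\}},\lambda_{\{1,2\}}$ summing to $1$; $A_k(n+1)=1$ if receiver $k$ receives at slot $n$ and $A_k(n+1)=A_k(n)+1$ otherwise), assume $\lambda_{\{1\}}+\lambda_{\{1,2\}}>0$ and $\lambda_{\{2\}}+\lambda_{\{1,2\}}>0$. If $(A_1,A_2)$ has the stationary distribution, then $$\mathrm{Cov}(A_1,A_2)=\frac{\lambda_\emptyset\lambda_{\{1,2\}}-\lambda_{\{1\}}\lambda_{\{2\}}}{(\lambda_{\{1\}}+\lambda_{\{1,2\}})(\lambda_{\{2\}}+\lambda_{\{1,2\}})(1-\lambda_\emptyset)}.$$ Moreover, if $(\lambda_{\{1\}}+\lambda_{\{1,2\}})(\lambda_{\{2\}}+\lambda_{\{1,2\}})=\lambda_{\{1,2\}}$, then the stationary distribution has product form, $\mathbb{P}(A_1=i,A_2=j)=\mathbb{P}(A_1=i)\mathbb{P}(A_2=j)$ for all $i,j\ge1$, and $\mathrm{Cov}(A_1,A_2)=0$; otherwise $\mathrm{Cov}(A_1,A_2)\neq0$.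
   Context: Ages take values in $\{1,2,\dots\}$. The process $(A_1(n),A_2(n))$ is a Markov chain on $\{1,2,\dots\}^2$ with a unique stationary distribution under the stated assumptions. *)

theory Defs
  imports "HOL-Probability.Probability"
begin

text \<open>One slot of the two-receiver star network.  \<open>\<Lambda>\<close> is the distribution of the
  random set of receivers (a subset of {1,2}) that receive in a slot, so that
  \<open>pmf \<Lambda> {}\<close>, \<open>pmf \<Lambda> {1}\<close>, \<open>pmf \<Lambda> {2}\<close>, \<open>pmf \<Lambda> {1,2}\<close> are the lambdas.\<close>
definition age_step :: "nat set pmf \<Rightarrow> nat \<times> nat \<Rightarrow> (nat \<times> nat) pmf" where
  "age_step \<Lambda> a = map_pmf (\<lambda>S. (if 1 \<in> S then 1 else fst a + 1,
                                 if 2 \<in> S then 1 else snd a + 1)) \<Lambda>"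

definition stationary_age :: "nat set pmf \<Rightarrow> (nat \<times> nat) pmf \<Rightarrow> bool" where
  "stationary_age \<Lambda> \<pi> \<longleftrightarrow>
     set_pmf \<pi> \<subseteq> {(i, j). 1 \<le> i \<and> 1 \<le> j} \<and> bind_pmf \<pi> (age_step \<Lambda>) = \<pi>"

definition age_cov :: "(nat \<times> nat) pmf \<Rightarrow> real" where
  "age_cov \<pi> =
     measure_pmf.expectation \<pi> (\<lambda>a. real (fst a) * real (snd a))
     - measure_pmf.expectation \<pi> (\<lambda>a. real (fst a)) * measure_pmf.expectation \<pi> (\<lambda>a. real (snd a))"

end

theory Submission
  imports Defs
begin

text \<open>
  The age of a single receiver is a Markov chain on its own: it is
  reset to 1 with probability \<open>p\<^sub>k = \<lambda>{k} + \<lambda>{1,2}\<close> and otherwise grows by one.  The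
  stationary law of such a reset chain is the shifted geometric law \<open>1 + Geom(p)\<close>, so both
  marginals of a stationary \<open>\<pi>\<close> are known explicitly; in particular \<open>E[A\<^sub>k] = 1/p\<^sub>k\<close> and all
  second moments are finite.  Integrating \<open>A\<^sub>1 A\<^sub>2\<close> against the stationarity equation
  \<open>\<pi> = \<pi> \<bind> age_step \<Lambda>\<close> gives one linear equation for \<open>E[A\<^sub>1 A\<^sub>2]\<close>, which is solved to
  obtain the covariance.  For the product form, the point equations of stationarity
  determine \<open>\<pi>(i, j)\<close> recursively from the marginals; under the independence condition
  \<open>p\<^sub>1 p\<^sub>2 = \<lambda>{1,2}\<close> the reception law itself is a product, and induction shows that
  \<open>\<pi>\<close> is the product of its marginals.
\<close>

text \<open>A nonnegative summable sequence eventually lies below 1, so its squares are summable too.\<close>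

lemma summable_power2_nonneg:
  fixes a :: "nat \<Rightarrow> real"
  assumes "summable a" and "\<And>n. 0 \<le> a n"
  shows "summable (\<lambda>n. (a n)\<^sup>2)"
proof -
  have "eventually (\<lambda>n. a n < 1) sequentially"
    using summable_LIMSEQ_zero[OF assms(1)] by (rule order_tendstoD) simp
  then obtain N where N: "\<And>n. n \<ge> N \<Longrightarrow> a n < 1" by (auto simp: eventually_sequentially)
  have "norm ((a n)\<^sup>2) \<le> a n" if "n \<ge> N" for n
    using N[OF that] assms(2)[of n] by (simp add: power2_eq_square mult_left_le)
  then show ?thesis by (rule summable_comparison_test'[OF assms(1)])
qed

text \<open>The geometric law has a finite second moment: \<open>n\<^sup>2 q\<^sup>n = (n (\<surd>q)\<^sup>n)\<^sup>2\<close>.\<close>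

lemma integrable_square_geometric_pmf:
  assumes "p \<in> {0<..1}"
  shows "integrable (geometric_pmf p) (\<lambda>n. real n ^ 2)"
proof -
  define r where "r = sqrt (1 - p)"
  have r: "0 \<le> r" "r < 1" using assms by (auto simp: r_def)
  have "summable (\<lambda>n. r ^ n * real n)"
    using geometric_sums_times_n[of r] r by (auto simp: sums_iff)
  hence "summable (\<lambda>n. (r ^ n * real n)\<^sup>2)"
    using r by (intro summable_power2_nonneg) auto
  moreover have "(r ^ n * real n)\<^sup>2 = (1 - p) ^ n * real n ^ 2" for n
  proof -
    have "(r ^ n)\<^sup>2 = (r\<^sup>2) ^ n" by (simp flip: power_mult add: mult.commute)
    thus ?thesis using assms by (simp add: r_def power_mult_distrib)
  qed
  ultimately have "summable (\<lambda>n. p * ((1 - p) ^ n * real n ^ 2))"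
    by (intro summable_mult) simp
  thus ?thesis
    unfolding measure_pmf_eq_density using assms
    by (subst integrable_density) (auto simp: integrable_count_space_nat_iff mult_ac)
qed

lemma expectation_shifted_geometric:
  assumes "p \<in> {0<..1}"
  shows "integrable (map_pmf Suc (geometric_pmf p)) (\<lambda>n. real n ^ 2)"
    and "measure_pmf.expectation (map_pmf Suc (geometric_pmf p)) real = 1 / p"
proof -
  have "integrable (geometric_pmf p) (\<lambda>n. real n ^ 2 + 2 * real n + 1)"
    using integrable_square_geometric_pmf[OF assms] integrable_real_geometric_pmf[OF assms] by auto
  then show "integrable (map_pmf Suc (geometric_pmf p)) (\<lambda>n. real n ^ 2)"
    by (simp add: power2_eq_square algebra_simps comp_def)
  have "measure_pmf.expectation (map_pmf Suc (geometric_pmf p)) real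
        = measure_pmf.expectation (geometric_pmf p) real + 1"
    using integrable_real_geometric_pmf[OF assms] by simp
  also have "\<dots> = 1 / p"
    using assms expectation_geometric_pmf[OF assms] by (simp add: field_simps)
  finally show "measure_pmf.expectation (map_pmf Suc (geometric_pmf p)) real = 1 / p" .
qed

definition reset_step :: "real \<Rightarrow> nat \<Rightarrow> nat pmf" where
  "reset_step p i = map_pmf (\<lambda>b. if b then 1 else i + 1) (bernoulli_pmf p)"

lemma pmf_reset_step:
  assumes "0 \<le> p" "p \<le> 1"
  shows "pmf (reset_step p i) x = p * indicator {1} x + (1 - p) * indicator {i + 1} x"
  using assms unfolding reset_step_def map_pmf_def
  by (simp add: pmf_bind indicator_def)

lemma pmf_bind_reset_step:
  assumes "0 \<le> p" "p \<le> 1"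
  shows "pmf (bind_pmf \<mu> (reset_step p)) x = p * indicator {1} x + (1 - p) * measure_pmf.prob \<mu> {i. i + 1 = x}"
proof -
  define A where "A = {i. i + 1 = x}"
  have "pmf (bind_pmf \<mu> (reset_step p)) x = (\<integral>i. p * indicator {1} x + (1 - p) * indicator A i \<partial>\<mu>)"
    unfolding pmf_bind using assms
    by (intro Bochner_Integration.integral_cong) (auto simp: pmf_reset_step A_def indicator_def)
  also have "\<dots> = p * indicator {1} x + (1 - p) * measure_pmf.prob \<mu> A"
    by (subst Bochner_Integration.integral_add) (auto intro!: measure_pmf.integrable_const_bound[of _ 1])
  finally show ?thesis unfolding A_def .
qed

text \<open>The stationary law of the reset chain (supported away from 0) is \<open>1 + Geom(p)\<close>:
  the stationarity equation gives \<open>\<mu>(1) = p\<close> and \<open>\<mu>(n + 2) = (1 - p) \<mu>(n + 1)\<close>.\<close>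

lemma stationary_reset_chain_geometric:
  assumes p: "0 < p" "p \<le> 1" and not0: "0 \<notin> set_pmf \<mu>"
    and stat: "bind_pmf \<mu> (reset_step p) = \<mu>"
  shows "\<mu> = map_pmf Suc (geometric_pmf p)"
proof (rule pmf_eqI)
  have step: "pmf \<mu> (Suc n) = p * indicator {0} n + (1 - p) * pmf \<mu> n" for n
  proof -
    have "pmf \<mu> (Suc n) = pmf (bind_pmf \<mu> (reset_step p)) (Suc n)" by (simp add: stat)
    also have "\<dots> = p * indicator {1} (Suc n) + (1 - p) * measure_pmf.prob \<mu> {n}"
      using p by (simp add: pmf_bind_reset_step)
    finally show ?thesis by (simp add: measure_pmf_single indicator_def)
  qed
  have geo: "pmf \<mu> (Suc n) = (1 - p) ^ n * p" for n
  proof (induction n)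
    case 0
    then show ?case using step[of 0] not0 by (simp add: set_pmf_iff)
  next
    case (Suc n)
    then show ?case using step[of "Suc n"] by simp
  qed
  show "pmf \<mu> x = pmf (map_pmf Suc (geometric_pmf p)) x" for x
    using p not0 geo by (cases x) (auto simp: pmf_map_inj' set_pmf_iff pmf_map_outside)
qed

lemma map_pmf_member_bernoulli:
  "map_pmf (\<lambda>S. x \<in> S) \<Lambda> = bernoulli_pmf (measure_pmf.prob \<Lambda> {S. x \<in> S})"
proof (rule pmf_eqI)
  fix b :: bool
  have "pmf (map_pmf (\<lambda>S. x \<in> S) \<Lambda>) b = measure_pmf.prob \<Lambda> {S. (x \<in> S) = b}"
    by (simp add: pmf_map vimage_def)
  also have "\<dots> = pmf (bernoulli_pmf (measure_pmf.prob \<Lambda> {S. x \<in> S})) b"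
    by (cases b) (simp_all add: measure_pmf.prob_compl[symmetric] Compl_eq set_diff_eq)
  finally show "pmf (map_pmf (\<lambda>S. x \<in> S) \<Lambda>) b = pmf (bernoulli_pmf (measure_pmf.prob \<Lambda> {S. x \<in> S})) b" .
qed

lemma receivers_sum:
  assumes "set_pmf \<Lambda> \<subseteq> {{}, {1}, {2}, {1, 2 :: nat}}"
  shows "pmf \<Lambda> {} + pmf \<Lambda> {1} + pmf \<Lambda> {2} + pmf \<Lambda> {1, 2} = 1"
  using sum_pmf_eq_1[OF _ assms] by (simp add: insert_eq_iff add.assoc)

lemma prob_receives:
  assumes "set_pmf \<Lambda> \<subseteq> {{}, {1}, {2}, {1, 2 :: nat}}"
  shows "measure_pmf.prob \<Lambda> {S. 1 \<in> S} = pmf \<Lambda> {1} + pmf \<Lambda> {1, 2}"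
    and "measure_pmf.prob \<Lambda> {S. 2 \<in> S} = pmf \<Lambda> {2} + pmf \<Lambda> {1, 2}"
proof -
  have "{S. 1 \<in> S} \<inter> set_pmf \<Lambda> = {{1}, {1, 2}} \<inter> set_pmf \<Lambda>"
    and "{S. 2 \<in> S} \<inter> set_pmf \<Lambda> = {{2}, {1, 2}} \<inter> set_pmf \<Lambda>"
    using assms by auto
  then have "measure_pmf.prob \<Lambda> {S. 1 \<in> S} = measure_pmf.prob \<Lambda> {{1}, {1, 2}}"
    and "measure_pmf.prob \<Lambda> {S. 2 \<in> S} = measure_pmf.prob \<Lambda> {{2}, {1, 2}}"
    by (metis measure_Int_set_pmf)+
  then show "measure_pmf.prob \<Lambda> {S. 1 \<in> S} = pmf \<Lambda> {1} + pmf \<Lambda> {1, 2}"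
    and "measure_pmf.prob \<Lambda> {S. 2 \<in> S} = pmf \<Lambda> {2} + pmf \<Lambda> {1, 2}"
    by (simp_all add: measure_measure_pmf_finite)
qed

lemma nn_integral_receivers:
  fixes \<Lambda> :: "nat set pmf" and f :: "nat set \<Rightarrow> ennreal"
  assumes "set_pmf \<Lambda> \<subseteq> {{}, {1}, {2}, {1, 2}}"
  shows "(\<integral>\<^sup>+S. f S \<partial>\<Lambda>) = f {} * pmf \<Lambda> {} + f {1} * pmf \<Lambda> {1} + f {2} * pmf \<Lambda> {2} + f {1, 2} * pmf \<Lambda> {1, 2}"
proof -
  have "(\<integral>\<^sup>+S. f S \<partial>\<Lambda>) = (\<Sum>S\<in>{{}, {1}, {2}, {1, 2}}. f S * pmf \<Lambda> S)"
    using assms by (intro nn_integral_measure_pmf_support) auto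
  then show ?thesis by (simp add: insert_eq_iff add.assoc)
qed

lemma marginal_fst_stationary:
  assumes "stationary_age \<Lambda> \<pi>"
  shows "bind_pmf (map_pmf fst \<pi>) (reset_step (measure_pmf.prob \<Lambda> {S. 1 \<in> S})) = map_pmf fst \<pi>"
proof -
  have "map_pmf fst \<pi> = map_pmf fst (bind_pmf \<pi> (age_step \<Lambda>))"
    using assms by (simp add: stationary_age_def)
  also have "\<dots> = bind_pmf \<pi> (\<lambda>a. map_pmf (\<lambda>b. if b then 1 else fst a + 1) (map_pmf (\<lambda>S. 1 \<in> S) \<Lambda>))"
    by (simp add: map_bind_pmf age_step_def map_pmf_comp)
  also have "\<dots> = bind_pmf (map_pmf fst \<pi>) (reset_step (measure_pmf.prob \<Lambda> {S. 1 \<in> S}))"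
    by (simp add: bind_map_pmf reset_step_def map_pmf_member_bernoulli)
  finally show ?thesis ..
qed

lemma marginal_snd_stationary:
  assumes "stationary_age \<Lambda> \<pi>"
  shows "bind_pmf (map_pmf snd \<pi>) (reset_step (measure_pmf.prob \<Lambda> {S. 2 \<in> S})) = map_pmf snd \<pi>"
proof -
  have "map_pmf snd \<pi> = map_pmf snd (bind_pmf \<pi> (age_step \<Lambda>))"
    using assms by (simp add: stationary_age_def)
  also have "\<dots> = bind_pmf \<pi> (\<lambda>a. map_pmf (\<lambda>b. if b then 1 else snd a + 1) (map_pmf (\<lambda>S. 2 \<in> S) \<Lambda>))"
    by (simp add: map_bind_pmf age_step_def map_pmf_comp)
  also have "\<dots> = bind_pmf (map_pmf snd \<pi>) (reset_step (measure_pmf.prob \<Lambda> {S. 2 \<in> S}))"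
    by (simp add: bind_map_pmf reset_step_def map_pmf_member_bernoulli)
  finally show ?thesis ..
qed

text \<open>Point probabilities as integrals of indicators, so that stationarity can be applied to them.\<close>

lemma ennreal_pmf_as_nn_integral: "ennreal (pmf M x) = (\<integral>\<^sup>+y. indicator {x} y \<partial>measure_pmf M)"
  by (simp add: emeasure_pmf_single)

context
  fixes \<Lambda> :: "nat set pmf" and \<pi> :: "(nat \<times> nat) pmf"
  assumes supp: "set_pmf \<Lambda> \<subseteq> {{}, {1}, {2}, {1, 2}}"
    and stat: "stationary_age \<Lambda> \<pi>"
begin

lemma nn_integral_cong_ages:
  "(\<And>i j. 1 \<le> i \<Longrightarrow> 1 \<le> j \<Longrightarrow> f (i, j) = g (i, j)) \<Longrightarrow> (\<integral>\<^sup>+a. f a \<partial>\<pi>) = (\<integral>\<^sup>+a. g a \<partial>\<pi>)"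
  using stat unfolding stationary_age_def
  by (intro nn_integral_cong_AE) (auto simp: AE_measure_pmf_iff)

lemma stationary_nn_integral:
  "(\<integral>\<^sup>+a. h a \<partial>\<pi>) = (\<integral>\<^sup>+a. h (fst a + 1, snd a + 1) * pmf \<Lambda> {} + h (1, snd a + 1) * pmf \<Lambda> {1}
            + h (fst a + 1, 1) * pmf \<Lambda> {2} + h (1, 1) * pmf \<Lambda> {1, 2} \<partial>\<pi>)"
proof -
  have "(\<integral>\<^sup>+a. h a \<partial>\<pi>) = (\<integral>\<^sup>+a. h a \<partial>bind_pmf \<pi> (age_step \<Lambda>))"
    using stat by (simp add: stationary_age_def)
  also have "\<dots> = (\<integral>\<^sup>+a. \<integral>\<^sup>+S. h (if 1 \<in> S then 1 else fst a + 1, if 2 \<in> S then 1 else snd a + 1) \<partial>\<Lambda> \<partial>\<pi>)"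
    by (simp add: age_step_def)
  finally show ?thesis by (simp add: nn_integral_receivers[OF supp])
qed

lemma stationary_integral:
  fixes f :: "nat \<times> nat \<Rightarrow> real"
  assumes nonneg: "\<And>a. f a \<ge> 0" and "integrable \<pi> f"
    and int_both: "integrable \<pi> (\<lambda>a. f (fst a + 1, snd a + 1))"
    and int_snd: "integrable \<pi> (\<lambda>a. f (1, snd a + 1))"
    and int_fst: "integrable \<pi> (\<lambda>a. f (fst a + 1, 1))"
  shows "(\<integral>a. f a \<partial>\<pi>) = (\<integral>a. f (fst a + 1, snd a + 1) \<partial>\<pi>) * pmf \<Lambda> {} + (\<integral>a. f (1, snd a + 1) \<partial>\<pi>) * pmf \<Lambda> {1}
     + (\<integral>a. f (fst a + 1, 1) \<partial>\<pi>) * pmf \<Lambda> {2} + f (1, 1) * pmf \<Lambda> {1, 2}"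
proof -
  let ?g = "\<lambda>a. f (fst a + 1, snd a + 1) * pmf \<Lambda> {} + f (1, snd a + 1) * pmf \<Lambda> {1}
            + f (fst a + 1, 1) * pmf \<Lambda> {2} + f (1, 1) * pmf \<Lambda> {1, 2}"
  have "integrable \<pi> ?g" using int_both int_snd int_fst by simp
  have "ennreal (\<integral>a. f a \<partial>\<pi>) = (\<integral>\<^sup>+a. ennreal (f a) \<partial>\<pi>)"
    using assms by (simp add: nn_integral_eq_integral)
  also have "\<dots> = (\<integral>\<^sup>+a. ennreal (?g a) \<partial>\<pi>)"
    by (subst stationary_nn_integral)
       (auto intro!: nn_integral_cong simp: nonneg ennreal_mult ennreal_plus[symmetric])
  also have "\<dots> = ennreal (\<integral>a. ?g a \<partial>\<pi>)"
    using \<open>integrable \<pi> ?g\<close> nonneg by (subst nn_integral_eq_integral) auto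
  finally have "(\<integral>a. f a \<partial>\<pi>) = (\<integral>a. ?g a \<partial>\<pi>)"
    using nonneg by (subst (asm) ennreal_inj) (auto intro!: integral_nonneg)
  then show ?thesis using int_both int_snd int_fst by simp
qed

text \<open>Point equations of the stationary law: both ages are 1 exactly when both
  receivers just received; age pairs \<open>(i+1, j+1)\<close> arise only from \<open>(i, j)\<close> via an
  empty reception set; \<open>(1, j+1)\<close> needs reception by receiver 1 only, and symmetrically
  for \<open>(i+1, 1)\<close>.\<close>

lemma pmf_ages_1_1: "pmf \<pi> (1, 1) = pmf \<Lambda> {1, 2}"
proof -
  have "ennreal (pmf \<pi> (1, 1)) = (\<integral>\<^sup>+a. indicator {(1, 1)} a \<partial>\<pi>)" by (rule ennreal_pmf_as_nn_integral)
  also have "\<dots> = (\<integral>\<^sup>+a. ennreal (pmf \<Lambda> {1, 2}) \<partial>\<pi>)"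
    by (subst stationary_nn_integral, rule nn_integral_cong_ages) (auto simp: indicator_def)
  finally show ?thesis by simp
qed

lemma pmf_ages_Suc_Suc:
  assumes "1 \<le> i" "1 \<le> j"
  shows "pmf \<pi> (Suc i, Suc j) = pmf \<Lambda> {} * pmf \<pi> (i, j)"
proof -
  have "ennreal (pmf \<pi> (Suc i, Suc j)) = (\<integral>\<^sup>+a. indicator {(Suc i, Suc j)} a \<partial>\<pi>)"
    by (rule ennreal_pmf_as_nn_integral)
  also have "\<dots> = (\<integral>\<^sup>+a. indicator {(i, j)} a * ennreal (pmf \<Lambda> {}) \<partial>\<pi>)"
    using assms by (subst stationary_nn_integral) (auto simp: indicator_def intro!: nn_integral_cong_ages)
  also have "\<dots> = ennreal (pmf \<pi> (i, j)) * ennreal (pmf \<Lambda> {})"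
    by (simp add: nn_integral_multc ennreal_pmf_as_nn_integral)
  finally show ?thesis by (simp add: ennreal_mult[symmetric] mult.commute)
qed

lemma pmf_ages_1_Suc:
  assumes "1 \<le> j"
  shows "pmf \<pi> (1, Suc j) = pmf \<Lambda> {1} * pmf (map_pmf snd \<pi>) j"
proof -
  have "ennreal (pmf \<pi> (1, Suc j)) = (\<integral>\<^sup>+a. indicator {(1, Suc j)} a \<partial>\<pi>)"
    by (rule ennreal_pmf_as_nn_integral)
  also have "\<dots> = (\<integral>\<^sup>+a. indicator {j} (snd a) * ennreal (pmf \<Lambda> {1}) \<partial>\<pi>)"
    using assms by (subst stationary_nn_integral) (auto simp: indicator_def intro!: nn_integral_cong_ages)
  also have "\<dots> = ennreal (pmf (map_pmf snd \<pi>) j) * ennreal (pmf \<Lambda> {1})"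
    by (simp add: nn_integral_multc ennreal_pmf_as_nn_integral)
  finally show ?thesis by (simp add: ennreal_mult[symmetric] mult.commute)
qed

lemma pmf_ages_Suc_1:
  assumes "1 \<le> i"
  shows "pmf \<pi> (Suc i, 1) = pmf \<Lambda> {2} * pmf (map_pmf fst \<pi>) i"
proof -
  have "ennreal (pmf \<pi> (Suc i, 1)) = (\<integral>\<^sup>+a. indicator {(Suc i, 1)} a \<partial>\<pi>)"
    by (rule ennreal_pmf_as_nn_integral)
  also have "\<dots> = (\<integral>\<^sup>+a. indicator {i} (fst a) * ennreal (pmf \<Lambda> {2}) \<partial>\<pi>)"
    using assms by (subst stationary_nn_integral) (auto simp: indicator_def intro!: nn_integral_cong_ages)
  also have "\<dots> = ennreal (pmf (map_pmf fst \<pi>) i) * ennreal (pmf \<Lambda> {2})"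
    by (simp add: nn_integral_multc ennreal_pmf_as_nn_integral)
  finally show ?thesis by (simp add: ennreal_mult[symmetric] mult.commute)
qed

lemma marginals_geometric:
  assumes pos1: "pmf \<Lambda> {1} + pmf \<Lambda> {1, 2} > 0" and pos2: "pmf \<Lambda> {2} + pmf \<Lambda> {1, 2} > 0"
  shows "map_pmf fst \<pi> = map_pmf Suc (geometric_pmf (pmf \<Lambda> {1} + pmf \<Lambda> {1, 2}))"
    and "map_pmf snd \<pi> = map_pmf Suc (geometric_pmf (pmf \<Lambda> {2} + pmf \<Lambda> {1, 2}))"
proof -
  have no_zero: "0 \<notin> set_pmf (map_pmf fst \<pi>)" "0 \<notin> set_pmf (map_pmf snd \<pi>)"
    using stat unfolding stationary_age_def by force+
  show "map_pmf fst \<pi> = map_pmf Suc (geometric_pmf (pmf \<Lambda> {1} + pmf \<Lambda> {1, 2}))"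
    using stationary_reset_chain_geometric[OF _ _ no_zero(1) marginal_fst_stationary[OF stat]]
      pos1 prob_receives[OF supp] measure_pmf.prob_le_1[of \<Lambda> "{S. 1 \<in> S}"] by simp
  show "map_pmf snd \<pi> = map_pmf Suc (geometric_pmf (pmf \<Lambda> {2} + pmf \<Lambda> {1, 2}))"
    using stationary_reset_chain_geometric[OF _ _ no_zero(2) marginal_snd_stationary[OF stat]]
      pos2 prob_receives[OF supp] measure_pmf.prob_le_1[of \<Lambda> "{S. 2 \<in> S}"] by simp
qed

context
  assumes pos1: "pmf \<Lambda> {1} + pmf \<Lambda> {1, 2} > 0"
    and pos2: "pmf \<Lambda> {2} + pmf \<Lambda> {1, 2} > 0"
begin

lemma reset_probabilities:
  shows "pmf \<Lambda> {1} + pmf \<Lambda> {1, 2} \<in> {0<..1}" and "pmf \<Lambda> {2} + pmf \<Lambda> {1, 2} \<in> {0<..1}"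
  using pos1 pos2 receivers_sum[OF supp] pmf_nonneg[of \<Lambda>] by (smt (verit) greaterThanAtMost_iff)+

text \<open>First moments of the ages and integrability of \<open>A\<^sub>1\<close>, \<open>A\<^sub>2\<close> and \<open>A\<^sub>1 A\<^sub>2\<close>; the latter is
  dominated by \<open>A\<^sub>1\<^sup>2 + A\<^sub>2\<^sup>2\<close>, which is integrable by the geometric marginals.\<close>

lemma age_moments:
  shows "integrable \<pi> (\<lambda>a. real (fst a))" and "integrable \<pi> (\<lambda>a. real (snd a))"
    and "integrable \<pi> (\<lambda>a. real (fst a) * real (snd a))"
    and "(\<integral>a. real (fst a) \<partial>\<pi>) = 1 / (pmf \<Lambda> {1} + pmf \<Lambda> {1, 2})"
    and "(\<integral>a. real (snd a) \<partial>\<pi>) = 1 / (pmf \<Lambda> {2} + pmf \<Lambda> {1, 2})"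
proof -
  note p = reset_probabilities
  note marg = marginals_geometric[OF pos1 pos2]
  have "integrable (map_pmf fst \<pi>) (\<lambda>n. real n ^ 2)" "integrable (map_pmf snd \<pi>) (\<lambda>n. real n ^ 2)"
    unfolding marg using expectation_shifted_geometric(1) p by blast+
  then have sq: "integrable \<pi> (\<lambda>a. real (fst a) ^ 2 + real (snd a) ^ 2)" by simp
  have bound: "real x \<le> real x ^ 2 + real y ^ 2" "real x * real y \<le> real x ^ 2 + real y ^ 2"
    for x y :: nat
  proof -
    have "x \<le> x ^ 2" by (cases x) (simp_all add: power2_eq_square)
    then show "real x \<le> real x ^ 2 + real y ^ 2" by (simp add: add_increasing2 flip: of_nat_power)
    show "real x * real y \<le> real x ^ 2 + real y ^ 2"
      using sum_squares_bound[of "real x" "real y"] mult_nonneg_nonneg[of "real x" "real y"] by linarith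
  qed
  show "integrable \<pi> (\<lambda>a. real (fst a))" "integrable \<pi> (\<lambda>a. real (snd a))"
    "integrable \<pi> (\<lambda>a. real (fst a) * real (snd a))"
    using bound by (auto intro!: Bochner_Integration.integrable_bound[OF sq] AE_I2) (metis add.commute)
  show "(\<integral>a. real (fst a) \<partial>\<pi>) = 1 / (pmf \<Lambda> {1} + pmf \<Lambda> {1, 2})"
    using expectation_shifted_geometric(2)[OF p(1)] marg(1) by (simp flip: integral_map_pmf)
  show "(\<integral>a. real (snd a) \<partial>\<pi>) = 1 / (pmf \<Lambda> {2} + pmf \<Lambda> {1, 2})"
    using expectation_shifted_geometric(2)[OF p(2)] marg(2) by (simp flip: integral_map_pmf)
qed

lemma cross_moment_equation:
  defines "e1 \<equiv> \<integral>a. real (fst a) \<partial>\<pi>" and "e2 \<equiv> \<integral>a. real (snd a) \<partial>\<pi>"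
    and "m \<equiv> \<integral>a. real (fst a) * real (snd a) \<partial>\<pi>"
  shows "m = (m + e1 + e2 + 1) * pmf \<Lambda> {} + (e2 + 1) * pmf \<Lambda> {1} + (e1 + 1) * pmf \<Lambda> {2} + pmf \<Lambda> {1, 2}"
proof -
  note int = age_moments(1-3)
  have "m = (\<integral>a. real (fst a) * real (snd a) + real (fst a) + real (snd a) + 1 \<partial>\<pi>) * pmf \<Lambda> {}
      + (\<integral>a. real (snd a) + 1 \<partial>\<pi>) * pmf \<Lambda> {1} + (\<integral>a. real (fst a) + 1 \<partial>\<pi>) * pmf \<Lambda> {2} + pmf \<Lambda> {1, 2}"
    unfolding m_def using int
    by (subst stationary_integral) (auto simp: algebra_simps)
  also have "\<dots> = (m + e1 + e2 + 1) * pmf \<Lambda> {} + (e2 + 1) * pmf \<Lambda> {1} + (e1 + 1) * pmf \<Lambda> {2} + pmf \<Lambda> {1, 2}"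
    unfolding m_def e1_def e2_def using int by simp
  finally show ?thesis .
qed

text \<open>Under \<open>p\<^sub>1 p\<^sub>2 = \<lambda>{1,2}\<close> the two receptions are independent, and the point equations
  propagate the product form from \<open>(1, 1)\<close> to every age pair.\<close>

lemma product_form:
  assumes indep: "(pmf \<Lambda> {1} + pmf \<Lambda> {1, 2}) * (pmf \<Lambda> {2} + pmf \<Lambda> {1, 2}) = pmf \<Lambda> {1, 2}"
  shows "pmf \<pi> (Suc i, Suc j) = pmf (map_pmf fst \<pi>) (Suc i) * pmf (map_pmf snd \<pi>) (Suc j)"
proof -
  define p1 where "p1 = pmf \<Lambda> {1} + pmf \<Lambda> {1, 2}"
  define p2 where "p2 = pmf \<Lambda> {2} + pmf \<Lambda> {1, 2}"
  have sum: "pmf \<Lambda> {} + pmf \<Lambda> {1} + pmf \<Lambda> {2} + pmf \<Lambda> {1, 2} = 1" by (rule receivers_sum[OF supp])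
  have both: "pmf \<Lambda> {1, 2} = p1 * p2" using indep by (simp add: p1_def p2_def)
  have only1: "pmf \<Lambda> {1} = p1 * (1 - p2)" and only2: "pmf \<Lambda> {2} = p2 * (1 - p1)"
    and none: "pmf \<Lambda> {} = (1 - p1) * (1 - p2)"
    using sum both by (simp_all add: p1_def p2_def algebra_simps)
  note p = reset_probabilities[folded p1_def p2_def]
  note marg = marginals_geometric[OF pos1 pos2, folded p1_def p2_def]
  have fst_Suc: "pmf (map_pmf fst \<pi>) (Suc n) = (1 - p1) ^ n * p1"
    and snd_Suc: "pmf (map_pmf snd \<pi>) (Suc n) = (1 - p2) ^ n * p2" for n
    using p by (simp_all add: marg pmf_map_inj')
  show ?thesis
  proof (induction i arbitrary: j)
    case 0
    show ?case
    proof (cases j)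
      case 0
      then show ?thesis using pmf_ages_1_1 both by (simp add: fst_Suc snd_Suc)
    next
      case (Suc k)
      then show ?thesis
        using pmf_ages_1_Suc[of "Suc k", unfolded only1] by (simp add: fst_Suc snd_Suc)
    qed
  next
    case (Suc i)
    show ?case
    proof (cases j)
      case 0
      then show ?thesis
        using pmf_ages_Suc_1[of "Suc i", unfolded only2] by (simp add: fst_Suc snd_Suc)
    next
      case (Suc k)
      then show ?thesis
        using pmf_ages_Suc_Suc[of "Suc i" "Suc k"] Suc.IH[of k]
        by (simp add: fst_Suc snd_Suc none mult_ac)
    qed
  qed
qed

end

end

lemma covariance_from_moment_equations:
  fixes l0 l1 l2 l12 e1 e2 m :: real
  assumes sum: "l0 + l1 + l2 + l12 = 1" and pos: "l1 + l12 > 0" "l2 + l12 > 0" "l0 < 1"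
    and e1: "e1 * (l1 + l12) = 1" and e2: "e2 * (l2 + l12) = 1"
    and m: "m = (m + e1 + e2 + 1) * l0 + (e2 + 1) * l1 + (e1 + 1) * l2 + l12"
  shows "m - e1 * e2 = (l0 * l12 - l1 * l2) / ((l1 + l12) * (l2 + l12) * (1 - l0))"
proof -
  have l12: "l12 = 1 - l0 - l1 - l2" using sum by simp
  have m': "m * (1 - l0) = l0 * (e1 + e2) + l1 * e2 + l2 * e1 + 1"
    using m sum by (simp add: algebra_simps l12)
  have "(m - e1 * e2) * ((l1 + l12) * (l2 + l12) * (1 - l0))
        = (m * (1 - l0)) * (l1 + l12) * (l2 + l12) - (e1 * (l1 + l12)) * (e2 * (l2 + l12)) * (1 - l0)"
    by (simp add: algebra_simps)
  also have "\<dots> = (l0 * (e1 + e2) + l1 * e2 + l2 * e1 + 1) * (l1 + l12) * (l2 + l12) - (1 - l0)"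
    by (simp add: m' e1 e2)
  also have "\<dots> = l0 * ((e1 * (l1 + l12)) * (l2 + l12) + (e2 * (l2 + l12)) * (l1 + l12))
       + l1 * (e2 * (l2 + l12)) * (l1 + l12) + l2 * (e1 * (l1 + l12)) * (l2 + l12)
       + (l1 + l12) * (l2 + l12) - (1 - l0)"
    by (simp add: algebra_simps)
  also have "\<dots> = l0 * ((l2 + l12) + (l1 + l12)) + l1 * (l1 + l12) + l2 * (l2 + l12)
       + (l1 + l12) * (l2 + l12) - (1 - l0)"
    by (simp only: e1 e2 mult_1_left)
  also have "\<dots> = l0 * l12 - l1 * l2"
    by (simp add: l12 algebra_simps)
  finally show ?thesis using pos by (simp add: eq_divide_eq)
qed

lemma reception_independence_defect:
  fixes l0 l1 l2 l12 :: real
  assumes "l0 + l1 + l2 + l12 = 1"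
  shows "(l1 + l12) * (l2 + l12) - l12 = - (l0 * l12 - l1 * l2)"
proof -
  have "(l1 + l12) * (l2 + l12) - l12 + (l0 * l12 - l1 * l2) = l12 * (l0 + l1 + l2 + l12 - 1)"
    by (simp add: algebra_simps)
  then show ?thesis using assms by simp
qed

theorem mainTheorem3:
  fixes \<Lambda> :: "nat set pmf" and \<pi> :: "(nat \<times> nat) pmf"
  assumes supp: "set_pmf \<Lambda> \<subseteq> {{}, {1}, {2}, {1, 2}}"
    and pos1: "pmf \<Lambda> {1} + pmf \<Lambda> {1, 2} > 0"
    and pos2: "pmf \<Lambda> {2} + pmf \<Lambda> {1, 2} > 0"
    and stat: "stationary_age \<Lambda> \<pi>"
  shows "age_cov \<pi> =
           (pmf \<Lambda> {} * pmf \<Lambda> {1, 2} - pmf \<Lambda> {1} * pmf \<Lambda> {2}) /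
           ((pmf \<Lambda> {1} + pmf \<Lambda> {1, 2}) * (pmf \<Lambda> {2} + pmf \<Lambda> {1, 2}) * (1 - pmf \<Lambda> {}))
       \<and> ((pmf \<Lambda> {1} + pmf \<Lambda> {1, 2}) * (pmf \<Lambda> {2} + pmf \<Lambda> {1, 2}) = pmf \<Lambda> {1, 2} \<longrightarrow>
            (\<forall>i j. 1 \<le> i \<longrightarrow> 1 \<le> j \<longrightarrow>
               pmf \<pi> (i, j) = pmf (map_pmf fst \<pi>) i * pmf (map_pmf snd \<pi>) j)
            \<and> age_cov \<pi> = 0)
       \<and> ((pmf \<Lambda> {1} + pmf \<Lambda> {1, 2}) * (pmf \<Lambda> {2} + pmf \<Lambda> {1, 2}) \<noteq> pmf \<Lambda> {1, 2} \<longrightarrow>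
            age_cov \<pi> \<noteq> 0)"
proof -
  have sum: "pmf \<Lambda> {} + pmf \<Lambda> {1} + pmf \<Lambda> {2} + pmf \<Lambda> {1, 2} = 1"
    by (rule receivers_sum[OF supp])
  have silent: "pmf \<Lambda> {} < 1" using sum pos1 pmf_nonneg[of \<Lambda> "{2}"] by linarith
  note moments = age_moments[OF supp stat pos1 pos2]
  have cov: "age_cov \<pi> =
           (pmf \<Lambda> {} * pmf \<Lambda> {1, 2} - pmf \<Lambda> {1} * pmf \<Lambda> {2}) /
           ((pmf \<Lambda> {1} + pmf \<Lambda> {1, 2}) * (pmf \<Lambda> {2} + pmf \<Lambda> {1, 2}) * (1 - pmf \<Lambda> {}))"
    unfolding age_cov_def
    by (rule covariance_from_moment_equations[OF sum pos1 pos2 silent _ _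
          cross_moment_equation[OF supp stat pos1 pos2]]) (use pos1 pos2 moments in simp_all)
  note defect = reception_independence_defect[OF sum]
  have product: "pmf \<pi> (i, j) = pmf (map_pmf fst \<pi>) i * pmf (map_pmf snd \<pi>) j"
    if "(pmf \<Lambda> {1} + pmf \<Lambda> {1, 2}) * (pmf \<Lambda> {2} + pmf \<Lambda> {1, 2}) = pmf \<Lambda> {1, 2}"
      and "1 \<le> i" "1 \<le> j" for i j
    using product_form[OF supp stat pos1 pos2 that(1), of "i - 1" "j - 1"] that(2,3) by simp
  have denominator: "(pmf \<Lambda> {1} + pmf \<Lambda> {1, 2}) * (pmf \<Lambda> {2} + pmf \<Lambda> {1, 2}) * (1 - pmf \<Lambda> {}) \<noteq> 0"
    using pos1 pos2 silent by simp
  show ?thesis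
  proof (intro conjI impI allI)
    assume "(pmf \<Lambda> {1} + pmf \<Lambda> {1, 2}) * (pmf \<Lambda> {2} + pmf \<Lambda> {1, 2}) = pmf \<Lambda> {1, 2}"
    then show "age_cov \<pi> = 0" using cov defect by simp
  next
    assume "(pmf \<Lambda> {1} + pmf \<Lambda> {1, 2}) * (pmf \<Lambda> {2} + pmf \<Lambda> {1, 2}) \<noteq> pmf \<Lambda> {1, 2}"
    then show "age_cov \<pi> \<noteq> 0" using cov defect denominator by simp
  qed (use cov product in auto)
qed

end
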